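(* Let $d \geq 1$, let $n_1,\dots,n_d \geq 1$, and let $G_{\mathrm{base}}$ be the unweighted $d$-dimensional grid graph with vertex set $[n_1]\times\cdots\times[n_d]$ (so $L = n_1 \cdots n_d$ vertices), where two vertices are adjacent iff they differ by exactly $1$ in exactly one coordinate. Let $f:\mathbb{N} \to \mathbb{R}$ be arbitrary and define the mask $\mathbf{M}$ indexed by the vertices by $\mathbf{M}_{u,v} = f(\mathrm{dist}_{G_{\mathrm{base}}}(u,v))$, where $\mathrm{dist}_{G_{\mathrm{base}}}$ is the shortest-path distance. Then there exists an ordering of the vertices such that $\mathbf{M}$, written as an $L\times L$ matrix in this ordering, is a $d$-level block-Toeplitz matrix.
   Context: A matrix $\mathbf{M} \in \mathbb{R}^{L\times L}$ is Toeplitz (equivalently, $1$-level block-Toeplitz) if there is $\xi:\mathbb{Z}\to\mathbb{R}$ with $\mathbf{M}_{i,j} = \xi(i-j)$ for all $i,j$. For $d \geq 2$, $\mathbf{M}$ is $d$-level block-Toeplitz if $\mathbf{M} = (\mathbf{B}^{i,j})_{i,j}$ is partitioned into blocks $\mathbf{B}^{i,j}$, each taken from some finite set $\{\mathbf{A}_1,\dots,\mathbf{A}_r\}$ of $(d-1)$-level block-Toeplitz matrices, such that replacing each block $\mathbf{B}^{i,j}$ by the index $k$ of its matrix $\mathbf{A}_k$ yields a Toeplitz matrix. *)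

theory Defs
  imports Complex_Main
begin

text \<open>Vertices of the grid [n_1] x ... x [n_d] are represented as lists of length d
  with coordinates 0-based: v ! i < ns ! i.\<close>

definition grid_vertices :: "nat list \<Rightarrow> nat list set" where
  "grid_vertices ns = {v. length v = length ns \<and> (\<forall>i<length ns. v ! i < ns ! i)}"

definition grid_adj :: "nat list \<Rightarrow> nat list \<Rightarrow> nat list \<Rightarrow> bool" where
  "grid_adj ns u v \<longleftrightarrow> u \<in> grid_vertices ns \<and> v \<in> grid_vertices ns \<and>
     (\<exists>i<length ns. (u ! i = v ! i + 1 \<or> v ! i = u ! i + 1) \<and>
        (\<forall>j<length ns. j \<noteq> i \<longrightarrow> u ! j = v ! j))"

definition grid_walk :: "nat list \<Rightarrow> nat list list \<Rightarrow> nat list \<Rightarrow> nat list \<Rightarrow> bool" where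
  "grid_walk ns p u v \<longleftrightarrow> p \<noteq> [] \<and> hd p = u \<and> last p = v \<and>
     set p \<subseteq> grid_vertices ns \<and> (\<forall>i. Suc i < length p \<longrightarrow> grid_adj ns (p ! i) (p ! Suc i))"

definition grid_dist :: "nat list \<Rightarrow> nat list \<Rightarrow> nat list \<Rightarrow> nat" where
  "grid_dist ns u v = (LEAST k. \<exists>p. grid_walk ns p u v \<and> length p = Suc k)"

definition toeplitz :: "nat \<Rightarrow> (nat \<Rightarrow> nat \<Rightarrow> 'a) \<Rightarrow> bool" where
  "toeplitz N M \<longleftrightarrow> (\<exists>\<xi> :: int \<Rightarrow> 'a. \<forall>i<N. \<forall>j<N. M i j = \<xi> (int i - int j))"

fun block_toeplitz :: "nat \<Rightarrow> nat \<Rightarrow> (nat \<Rightarrow> nat \<Rightarrow> real) \<Rightarrow> bool" where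
  "block_toeplitz 0 N M = False"
| "block_toeplitz (Suc 0) N M = toeplitz N M"
| "block_toeplitz (Suc (Suc d)) N M =
     (\<exists>m s r (A :: nat \<Rightarrow> nat \<Rightarrow> nat \<Rightarrow> real) (idx :: nat \<Rightarrow> nat \<Rightarrow> nat).
        N = m * s \<and>
        (\<forall>k<r. block_toeplitz (Suc d) s (A k)) \<and>
        (\<forall>a<m. \<forall>b<m. idx a b < r \<and>
           (\<forall>i<s. \<forall>j<s. M (a * s + i) (b * s + j) = A (idx a b) i j)) \<and>
        toeplitz m idx)"

end

theory Submission
  imports Defs
begin

text \<open>Number the vertices lexicographically, i.e. vertex number x is the list of digits of x in
  the mixed radix n_1, ..., n_d. The grid distance is the l1 distance, so M_{x,y} depends only on the
  vector of coordinate differences of the digits of x and y. Splitting off the leading digit cuts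
  such a matrix into n_1 x n_1 blocks of size n_2 ... n_d; the block at (a, b) depends only on a - b
  and is again a matrix of the same kind for the remaining radices, so induction on d applies.\<close>

fun mixed_radix_digits :: "nat list \<Rightarrow> nat \<Rightarrow> nat list" where
  "mixed_radix_digits [] x = []"
| "mixed_radix_digits (n # ns) x =
     (x div prod_list ns) # mixed_radix_digits ns (x mod prod_list ns)"

lemma mixed_radix_digits_Cons_block:
  "i < prod_list ns \<Longrightarrow> mixed_radix_digits (n # ns) (a * prod_list ns + i) = a # mixed_radix_digits ns i"
  by simp

lemma grid_vertices_Nil: "grid_vertices [] = {[]}"
  by (auto simp: grid_vertices_def)

lemma Cons_in_grid_vertices_iff [simp]:
  "a # v \<in> grid_vertices (n # ns) \<longleftrightarrow> a < n \<and> v \<in> grid_vertices ns"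
  by (auto simp: grid_vertices_def nth_Cons split: nat.splits)

lemma grid_vertices_Cons: "grid_vertices (n # ns) = (\<lambda>(a, v). a # v) ` ({..<n} \<times> grid_vertices ns)"
proof -
  have "v \<in> grid_vertices (n # ns) \<Longrightarrow> \<exists>a w. v = a # w" for v
    by (cases v) (auto simp: grid_vertices_def)
  then show ?thesis by force
qed

lemma mult_add_less_mult:
  fixes a i n s :: nat
  assumes "a < n" "i < s"
  shows "a * s + i < n * s"
proof -
  have "a * s + i < Suc a * s" using \<open>i < s\<close> by simp
  also have "\<dots> \<le> n * s" using \<open>a < n\<close> by (intro mult_le_mono1) simp
  finally show ?thesis .
qed

lemma bij_betw_div_mod:
  "bij_betw (\<lambda>x. (x div s, x mod s)) {..<n * s} ({..<n} \<times> {..<s :: nat})"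
proof (rule bij_betw_byWitness[where f' = "\<lambda>(a, i). a * s + i"])
  show "(\<lambda>x. (x div s, x mod s)) ` {..<n * s} \<subseteq> {..<n} \<times> {..<s}"
    by (cases "s = 0") (auto simp: less_mult_imp_div_less)
  show "(\<lambda>(a, i). a * s + i) ` ({..<n} \<times> {..<s}) \<subseteq> {..<n * s}"
    by (auto simp: mult_add_less_mult)
qed auto

lemma bij_betw_Cons_grid_vertices: "bij_betw (\<lambda>(a, v). a # v) ({..<n} \<times> grid_vertices ns) (grid_vertices (n # ns))"
  by (auto simp: bij_betw_def inj_on_def grid_vertices_Cons)

lemma bij_betw_mixed_radix_digits:
  "bij_betw (mixed_radix_digits ns) {..<prod_list ns} (grid_vertices ns)"
proof (induction ns)
  case Nil
  then show ?case by (simp add: grid_vertices_Nil bij_betw_def lessThan_Suc)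
next
  case (Cons n ns)
  have "bij_betw ((\<lambda>(a, v). a # v) \<circ> map_prod id (mixed_radix_digits ns) \<circ> (\<lambda>x. (x div prod_list ns, x mod prod_list ns)))
      {..<prod_list (n # ns)} (grid_vertices (n # ns))"
    using bij_betw_trans[OF bij_betw_div_mod
        bij_betw_trans[OF bij_betw_map_prod[OF bij_betw_id Cons.IH] bij_betw_Cons_grid_vertices]]
    by simp
  then show ?case by (simp add: comp_def)
qed

definition l1_dist :: "nat list \<Rightarrow> nat list \<Rightarrow> int" where
  "l1_dist u v = (\<Sum>i<length u. \<bar>int (u ! i) - int (v ! i)\<bar>)"

lemma l1_dist_nonneg: "0 \<le> l1_dist u v"
  by (simp add: l1_dist_def sum_nonneg)

lemma l1_dist_self [simp]: "l1_dist u u = 0"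
  by (simp add: l1_dist_def)

lemma l1_dist_triangle: "length u = length w \<Longrightarrow> l1_dist u v \<le> l1_dist u w + l1_dist w v"
  unfolding l1_dist_def by (simp add: sum.distrib[symmetric] sum_mono)

lemma l1_dist_eq_0_iff: "length u = length v \<Longrightarrow> l1_dist u v = 0 \<longleftrightarrow> u = v"
  by (auto simp: l1_dist_def sum_nonneg_eq_0_iff nth_equalityI)

lemma l1_dist_list_update:
  assumes "i < length u"
  shows "l1_dist (u[i := c]) v = l1_dist u v + \<bar>int c - int (v ! i)\<bar> - \<bar>int (u ! i) - int (v ! i)\<bar>"
proof -
  have "l1_dist (u[i := c]) v = (\<Sum>j<length u. \<bar>int (u ! j) - int (v ! j)\<bar> +
      (if j = i then \<bar>int c - int (v ! i)\<bar> - \<bar>int (u ! i) - int (v ! i)\<bar> else 0))"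
    unfolding l1_dist_def by (intro sum.cong) (auto simp: nth_list_update)
  then show ?thesis
    using assms by (simp add: sum.distrib l1_dist_def)
qed

lemma grid_adj_l1_dist:
  assumes "grid_adj ns u w"
  shows "l1_dist u w = 1"
proof -
  obtain i where "i < length ns" and "length u = length ns"
    and "\<bar>int (u ! i) - int (w ! i)\<bar> = 1"
    and "\<forall>j<length ns. j \<noteq> i \<longrightarrow> u ! j = w ! j"
    using assms by (auto simp: grid_adj_def grid_vertices_def)
  then have "l1_dist u w = (\<Sum>j<length ns. if j = i then 1 else 0)"
    unfolding l1_dist_def by (intro sum.cong) auto
  with \<open>i < length ns\<close> show ?thesis by simp
qed

lemma grid_walk_singleton: "grid_walk ns [w] u v \<longleftrightarrow> u = w \<and> v = w \<and> w \<in> grid_vertices ns"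
  by (auto simp: grid_walk_def)

lemma grid_walk_Cons_Cons:
  "grid_walk ns (w # w' # p) u v \<longleftrightarrow> u = w \<and> grid_adj ns w w' \<and> grid_walk ns (w' # p) w' v"
  unfolding grid_walk_def by (auto simp: nth_Cons grid_adj_def split: nat.splits)

lemma grid_walk_l1_dist_less: "grid_walk ns p u v \<Longrightarrow> l1_dist u v < length p"
proof (induction p arbitrary: u rule: induct_list012)
  case 1
  then show ?case by (simp add: grid_walk_def)
next
  case (2 w)
  then show ?case by (simp add: grid_walk_singleton)
next
  case (3 w w' p)
  then have "u = w" and adj: "grid_adj ns u w'" and "grid_walk ns (w' # p) w' v"
    by (simp_all add: grid_walk_Cons_Cons)
  then have "l1_dist w' v < length (w' # p)" using "3.IH" by blast
  moreover have "length u = length w'"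
    using adj by (auto simp: grid_adj_def grid_vertices_def)
  ultimately show ?case
    using l1_dist_triangle[of u w' v] grid_adj_l1_dist[OF adj] by simp
qed

lemma grid_step_towards:
  assumes "u \<in> grid_vertices ns" "v \<in> grid_vertices ns" "u \<noteq> v"
  obtains w where "grid_adj ns u w" "l1_dist w v = l1_dist u v - 1"
proof -
  have len: "length u = length ns" "length v = length ns"
    using assms by (auto simp: grid_vertices_def)
  then obtain i where i: "i < length ns" and "u ! i \<noteq> v ! i"
    using assms(3) nth_equalityI by metis
  define c where "c = (if u ! i < v ! i then Suc (u ! i) else u ! i - 1)"
  have "c < ns ! i"
    using assms i \<open>u ! i \<noteq> v ! i\<close> by (auto simp: c_def grid_vertices_def)
  then have "grid_adj ns u (u[i := c])"
    using assms i len \<open>u ! i \<noteq> v ! i\<close>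
    by (auto simp: grid_adj_def grid_vertices_def c_def nth_list_update intro!: exI[of _ i])
  moreover have "l1_dist (u[i := c]) v = l1_dist u v - 1"
    using i len \<open>u ! i \<noteq> v ! i\<close> by (auto simp: l1_dist_list_update c_def)
  ultimately show ?thesis by (rule that)
qed

lemma grid_walk_of_l1_dist:
  assumes "u \<in> grid_vertices ns" "v \<in> grid_vertices ns"
  shows "\<exists>p. grid_walk ns p u v \<and> length p = Suc (nat (l1_dist u v))"
proof -
  have "\<exists>p. grid_walk ns p u v \<and> length p = Suc k" if "l1_dist u v = int k" for k
    using that assms(1)
  proof (induction k arbitrary: u)
    case 0
    then have "u = v"
      using assms(2) l1_dist_eq_0_iff by (simp add: grid_vertices_def)
    then show ?case
      using assms(2) by (intro exI[of _ "[u]"]) (simp add: grid_walk_singleton)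
  next
    case (Suc k)
    then have "u \<noteq> v" by auto
    then obtain w where adj: "grid_adj ns u w" and "l1_dist w v = l1_dist u v - 1"
      using grid_step_towards Suc.prems(2) assms(2) by blast
    moreover have "w \<in> grid_vertices ns"
      using adj by (simp add: grid_adj_def)
    ultimately obtain p where walk: "grid_walk ns p w v" and "length p = Suc k"
      using Suc by auto
    moreover have "p = w # tl p"
      using walk by (cases p) (auto simp: grid_walk_def)
    ultimately show ?case
      using adj grid_walk_Cons_Cons[of ns u w "tl p" u v] by (intro exI[of _ "u # p"]) auto
  qed
  then show ?thesis
    using l1_dist_nonneg by simp
qed

lemma grid_dist_eq_l1_dist:
  assumes "u \<in> grid_vertices ns" "v \<in> grid_vertices ns"
  shows "grid_dist ns u v = nat (l1_dist u v)"
  unfolding grid_dist_def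
proof (rule Least_equality)
  show "\<exists>p. grid_walk ns p u v \<and> length p = Suc (nat (l1_dist u v))"
    using grid_walk_of_l1_dist[OF assms] .
next
  fix k assume "\<exists>p. grid_walk ns p u v \<and> length p = Suc k"
  then show "nat (l1_dist u v) \<le> k"
    using grid_walk_l1_dist_less by fastforce
qed

definition coord_diff :: "nat list \<Rightarrow> nat list \<Rightarrow> int list" where
  "coord_diff u v = map2 (\<lambda>a b. int a - int b) u v"

lemma l1_dist_eq_sum_list_coord_diff:
  "length u = length v \<Longrightarrow> l1_dist u v = sum_list (map abs (coord_diff u v))"
  by (simp add: l1_dist_def coord_diff_def sum_list_sum_nth atLeast0LessThan)

lemma block_toeplitz_if_coord_diff:
  assumes "ns \<noteq> []"
    and "\<And>i j. i < prod_list ns \<Longrightarrow> j < prod_list ns \<Longrightarrow>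
      M i j = F (coord_diff (mixed_radix_digits ns i) (mixed_radix_digits ns j))"
  shows "block_toeplitz (length ns) (prod_list ns) M"
  using assms
proof (induction ns arbitrary: F M)
  case Nil
  then show ?case by simp
next
  case (Cons n ns)
  show ?case
  proof (cases "ns = []")
    case True
    then have "toeplitz n M"
      unfolding toeplitz_def using Cons.prems(2)
      by (intro exI[of _ "\<lambda>k. F [k]"]) (simp add: coord_diff_def)
    with True show ?thesis by simp
  next
    case False
    then obtain d where d: "length ns = Suc d" by (cases ns) auto
    let ?s = "prod_list ns"
    define A where "A k i j =
      F ((int k - int n) # coord_diff (mixed_radix_digits ns i) (mixed_radix_digits ns j))" for k i j
    \<comment> \<open>the block index encodes the difference a - b of leading digits in {0..<2 * n}\<close>
    define idx where "idx a b = a + n - b" for a b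
    have "block_toeplitz (Suc d) ?s (A k)" for k
      using Cons.IH[OF False] d by (simp add: A_def)
    moreover have "idx a b < 2 * n" if "a < n" for a b
      using that by (simp add: idx_def)
    moreover have "M (a * ?s + i) (b * ?s + j) = A (idx a b) i j"
      if "a < n" "b < n" "i < ?s" "j < ?s" for a b i j
      using that Cons.prems(2) mult_add_less_mult
      by (simp add: A_def idx_def coord_diff_def mixed_radix_digits_Cons_block)
    moreover have "toeplitz n idx"
      unfolding toeplitz_def idx_def by (intro exI[of _ "\<lambda>k. nat (k + int n)"]) auto
    ultimately have "block_toeplitz (Suc (Suc d)) (n * ?s) M"
      unfolding block_toeplitz.simps by blast
    with d show ?thesis by simp
  qed
qed

theorem lemma3p3:
  fixes ns :: "nat list" and f :: "nat \<Rightarrow> real"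
  assumes "length ns \<ge> 1"
    and "\<forall>i<length ns. ns ! i \<ge> 1"
  shows "\<exists>\<sigma> :: nat \<Rightarrow> nat list.
           bij_betw \<sigma> {..<prod_list ns} (grid_vertices ns) \<and>
           block_toeplitz (length ns) (prod_list ns)
             (\<lambda>i j. f (grid_dist ns (\<sigma> i) (\<sigma> j)))"
proof -
  let ?\<sigma> = "mixed_radix_digits ns"
  have bij: "bij_betw ?\<sigma> {..<prod_list ns} (grid_vertices ns)"
    by (rule bij_betw_mixed_radix_digits)
  have "f (grid_dist ns (?\<sigma> i) (?\<sigma> j)) = f (nat (sum_list (map abs (coord_diff (?\<sigma> i) (?\<sigma> j)))))"
    if "i < prod_list ns" "j < prod_list ns" for i j
    using bij_betw_apply[OF bij] that
    by (simp add: grid_dist_eq_l1_dist l1_dist_eq_sum_list_coord_diff grid_vertices_def)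
  then have "block_toeplitz (length ns) (prod_list ns) (\<lambda>i j. f (grid_dist ns (?\<sigma> i) (?\<sigma> j)))"
    using assms(1) by (intro block_toeplitz_if_coord_diff) auto
  with bij show ?thesis by blast
qed

end
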